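(* Let $c$ be a command and $\rho_1,\rho_2,\mu_1,\mu_2$ states with $\mathtt b\notin\mathrm{UsedVars}(c)$, $\rho_1(\mathtt b)=\rho_2(\mathtt b)=0$, $|a|_{\mu_1}>0$ and $|a|_{\mu_2}>0$ for every array $a$, and $\langle c,\rho_1,\mu_1\rangle\approx\langle c,\rho_2,\mu_2\rangle$. Then $\langle\mathrm{USLH}(c),\rho_1,\mu_1,\mathtt{false}\rangle\approx_s\langle\mathrm{USLH}(c),\rho_2,\mu_2,\mathtt{false}\rangle$.
   Context: Language AWhile: scalar variables $X\in\mathcal V$, array names $a\in\mathcal A$. Arithmetic expressions $e::=n\ (n\in\mathbb N)\mid X\mid \mathrm{op}_{\mathbb N}(e,\dots,e)\mid be\,?\,e_1:e_2$; boolean expressions $be::=\mathtt{true}\mid\mathtt{false}\mid\mathrm{cmp}(e,e)\mid\mathrm{op}_{\mathbb B}(be,\dots,be)$; commands $c::=\mathtt{skip}\mid X:=e\mid c_1;c_2\mid \mathtt{if}\ be\ \mathtt{then}\ c_1\ \mathtt{else}\ c_2\mid\mathtt{while}\ be\ \mathtt{do}\ c\mid X\leftarrow a[e]\mid a[e]\leftarrow e'$. A scalar state is $\rho:\mathcal V\to\mathbb N$; an array state $\mu$ gives each array $a$ a size $|a|_\mu$ and values $\mu(a)[i]$ for $0\le i<|a|_\mu$. $[\![\cdot]\!]_\rho$ is the usual pure evaluation. $\mathrm{UsedVars}(c)$ is the set of scalar variables occurring in $c$; $\mathtt b$ is a reserved scalar variable. Sequential semantics: steps $\langle c,\rho,\mu\rangle\xrightarrow{o}\langle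 c',\rho',\mu'\rangle$, $o$ an optional observation $\mathrm{branch}(v)$, $\mathrm{read}(a,i)$, $\mathrm{write}(a,i)$. $X:=e\to\mathtt{skip}$ with $\rho[X\mapsto[\![e]\!]_\rho]$, no obs; $c_1;c_2\xrightarrow{o}c_1';c_2$ if $c_1\xrightarrow{o}c_1'$; $\mathtt{skip};c\to c$; $\mathtt{if}\ be\ \mathtt{then}\ c_{\mathtt{true}}\ \mathtt{else}\ c_{\mathtt{false}}\to c_v$, $v=[\![be]\!]_\rho$, obs $\mathrm{branch}(v)$; $\mathtt{while}\ be\ \mathtt{do}\ c\to\mathtt{if}\ be\ \mathtt{then}\ (c;\mathtt{while}\ be\ \mathtt{do}\ c)\ \mathtt{else}\ \mathtt{skip}$; $X\leftarrow a[ie]\to\mathtt{skip}$ setting $X$ to $\mu(a)[i]$, obs $\mathrm{read}(a,i)$, if $i=[\![ie]\!]_\rho<|a|_\mu$; $a[ie]\leftarrow e\to\mathtt{skip}$ with $\mu[a[i]\mapsto[\![e]\!]_\rho]$, obs $\mathrm{write}(a,i)$, if $i<|a|_\mu$. $\xrightarrow{O}{}^*$ is the reflexive-transitive closure collecting observations. $\langle c_1,\rho_1,\mu_1\rangle\approx\langle c_2,\rho_2,\mu_2\rangle$ iff for all $O_1,O_2$ with $\langle c_k,\rho_k,\mu_k\rangle\xrightarrow{O_k}{}^*$ some configuration, one of $O_1,O_2$ is a prefix of the other. Speculative semantics: configurations $\langle c,\rho,\mu,\beta\rangle$ with boolean flag $\beta$; steps labelled by an optional observation and optional directive $d\in\{\mathit{step},\mathit{force},\mathrm{load}(a',j),\mathrm{store}(a',j)\}$.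 Non-observing rules as sequentially (flag kept, no directive). Conditional: with $\mathit{step}$ as sequentially; with $\mathit{force}$ go to branch $\neg[\![be]\!]_\rho$ and set $\beta:=\mathtt{true}$; both observe $\mathrm{branch}([\![be]\!]_\rho)$. Read/write with $\mathit{step}$ as sequentially. Read with $\mathrm{load}(a',j)$: requires $\beta=\mathtt{true}$, $i=[\![ie]\!]_\rho\ge|a|_\mu$, $j<|a'|_\mu$, sets $X$ to $\mu(a')[j]$, obs $\mathrm{read}(a,i)$. Write with $\mathrm{store}(a',j)$: requires $\beta=\mathtt{true}$, $i\ge|a|_\mu$, $j<|a'|_\mu$, sets $\mu[a'[j]\mapsto[\![e]\!]_\rho]$, obs $\mathrm{write}(a,i)$. $\langle c_1,\rho_1,\mu_1,\beta_1\rangle\approx_s\langle c_2,\rho_2,\mu_2,\beta_2\rangle$ iff for all $D,O_1,O_2$, if both configurations multi-step with the same directive list $D$ producing $O_1$ resp. $O_2$, then $O_1=O_2$. Ultimate SLH: $\mathrm{USLH}(\mathtt{skip})=\mathtt{skip}$; $\mathrm{USLH}(X:=e)=X:=e$; $\mathrm{USLH}(c_1;c_2)=\mathrm{USLH}(c_1);\mathrm{USLH}(c_2)$; with $B(be)=(\mathtt b==0\ \&\&\ be)$: $\mathrm{USLH}(\mathtt{if}\ be\ \mathtt{then}\ c_1\ \mathtt{else}\ c_2)=\mathtt{if}\ B(be)\ \mathtt{then}\ (\mathtt b:=B(be)\,?\,\mathtt b:1;\mathrm{USLH}(c_1))\ \mathtt{else}\ (\mathtt b:=B(be)\,?\,1:\mathtt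 b;\mathrm{USLH}(c_2))$; $\mathrm{USLH}(\mathtt{while}\ be\ \mathtt{do}\ c)=(\mathtt{while}\ B(be)\ \mathtt{do}\ (\mathtt b:=B(be)\,?\,\mathtt b:1;\mathrm{USLH}(c)));\ \mathtt b:=B(be)\,?\,1:\mathtt b$; $\mathrm{USLH}(X\leftarrow a[i])=X\leftarrow a[(\mathtt b==1)\,?\,0:i]$; $\mathrm{USLH}(a[i]\leftarrow e)=a[(\mathtt b==1)\,?\,0:i]\leftarrow e$. *)

theory Defs
  imports Main "HOL-Library.Sublist"
begin

type_synonym vname = string
type_synonym aname = string

datatype aexp = ANum nat | AVar vname | AOp "nat list \<Rightarrow> nat" "aexp list"
              | ACond bexp aexp aexp
     and bexp = BTrue | BFalse | BCmp "nat \<Rightarrow> nat \<Rightarrow> bool" aexp aexp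
              | BOp "bool list \<Rightarrow> bool" "bexp list"

datatype com = Skip | Assign vname aexp | Seq com com | If bexp com com
             | While bexp com | ARead vname aname aexp | AWrite aname aexp aexp

type_synonym sstate = "vname \<Rightarrow> nat"
(* array state: each array is a list; its size is the length *)
type_synonym astate = "aname \<Rightarrow> nat list"

primrec aeval :: "sstate \<Rightarrow> aexp \<Rightarrow> nat" and beval :: "sstate \<Rightarrow> bexp \<Rightarrow> bool" where
  "aeval \<rho> (ANum n) = n"
| "aeval \<rho> (AVar x) = \<rho> x"
| "aeval \<rho> (AOp f es) = f (map (aeval \<rho>) es)"
| "aeval \<rho> (ACond b e1 e2) = (if beval \<rho> b then aeval \<rho> e1 else aeval \<rho> e2)"
| "beval \<rho> BTrue = True"
| "beval \<rho> BFalse = False"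
| "beval \<rho> (BCmp f e1 e2) = f (aeval \<rho> e1) (aeval \<rho> e2)"
| "beval \<rho> (BOp f bs) = f (map (beval \<rho>) bs)"

primrec avars :: "aexp \<Rightarrow> vname set" and bvars :: "bexp \<Rightarrow> vname set" where
  "avars (ANum n) = {}"
| "avars (AVar x) = {x}"
| "avars (AOp f es) = \<Union> (set (map avars es))"
| "avars (ACond b e1 e2) = bvars b \<union> avars e1 \<union> avars e2"
| "bvars BTrue = {}"
| "bvars BFalse = {}"
| "bvars (BCmp f e1 e2) = avars e1 \<union> avars e2"
| "bvars (BOp f bs) = \<Union> (set (map bvars bs))"

primrec used_vars :: "com \<Rightarrow> vname set" where
  "used_vars Skip = {}"
| "used_vars (Assign x e) = {x} \<union> avars e"
| "used_vars (Seq c1 c2) = used_vars c1 \<union> used_vars c2"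
| "used_vars (If b c1 c2) = bvars b \<union> used_vars c1 \<union> used_vars c2"
| "used_vars (While b c) = bvars b \<union> used_vars c"
| "used_vars (ARead x a i) = {x} \<union> avars i"
| "used_vars (AWrite a i e) = avars i \<union> avars e"

datatype obs = OBranch bool | ORead aname nat | OWrite aname nat

datatype direction = DStep | DForce | DLoad aname nat | DStore aname nat

(* Sequential semantics; an optional observation is a list of length <= 1. *)
inductive seq_step :: "com \<Rightarrow> sstate \<Rightarrow> astate \<Rightarrow> obs list \<Rightarrow> com \<Rightarrow> sstate \<Rightarrow> astate \<Rightarrow> bool" where
  Seq_Assign: "seq_step (Assign x e) \<rho> \<mu> [] Skip (\<rho>(x := aeval \<rho> e)) \<mu>"
| Seq_Seq: "seq_step c1 \<rho> \<mu> os c1' \<rho>' \<mu>' \<Longrightarrow> seq_step (Seq c1 c2) \<rho> \<mu> os (Seq c1' c2) \<rho>' \<mu>'"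
| Seq_Skip: "seq_step (Seq Skip c) \<rho> \<mu> [] c \<rho> \<mu>"
| Seq_If: "v = beval \<rho> b \<Longrightarrow>
    seq_step (If b c1 c2) \<rho> \<mu> [OBranch v] (if v then c1 else c2) \<rho> \<mu>"
| Seq_While: "seq_step (While b c) \<rho> \<mu> [] (If b (Seq c (While b c)) Skip) \<rho> \<mu>"
| Seq_Read: "i = aeval \<rho> ie \<Longrightarrow> i < length (\<mu> a) \<Longrightarrow>
    seq_step (ARead x a ie) \<rho> \<mu> [ORead a i] Skip (\<rho>(x := \<mu> a ! i)) \<mu>"
| Seq_Write: "i = aeval \<rho> ie \<Longrightarrow> i < length (\<mu> a) \<Longrightarrow>
    seq_step (AWrite a ie e) \<rho> \<mu> [OWrite a i] Skip \<rho> (\<mu>(a := (\<mu> a)[i := aeval \<rho> e]))"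

inductive seq_multi :: "com \<Rightarrow> sstate \<Rightarrow> astate \<Rightarrow> obs list \<Rightarrow> com \<Rightarrow> sstate \<Rightarrow> astate \<Rightarrow> bool" where
  seq_refl: "seq_multi c \<rho> \<mu> [] c \<rho> \<mu>"
| seq_trans: "seq_step c \<rho> \<mu> os c' \<rho>' \<mu>' \<Longrightarrow> seq_multi c' \<rho>' \<mu>' os' c'' \<rho>'' \<mu>'' \<Longrightarrow>
    seq_multi c \<rho> \<mu> (os @ os') c'' \<rho>'' \<mu>''"

definition seq_equiv :: "com \<Rightarrow> sstate \<Rightarrow> astate \<Rightarrow> com \<Rightarrow> sstate \<Rightarrow> astate \<Rightarrow> bool" where
  "seq_equiv c1 \<rho>1 \<mu>1 c2 \<rho>2 \<mu>2 \<longleftrightarrow>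
    (\<forall>O1 O2 c1' \<rho>1' \<mu>1' c2' \<rho>2' \<mu>2'.
       seq_multi c1 \<rho>1 \<mu>1 O1 c1' \<rho>1' \<mu>1' \<longrightarrow> seq_multi c2 \<rho>2 \<mu>2 O2 c2' \<rho>2' \<mu>2' \<longrightarrow>
       prefix O1 O2 \<or> prefix O2 O1)"

(* Speculative semantics; optional directive and observation are lists of length <= 1. *)
inductive spec_step :: "com \<Rightarrow> sstate \<Rightarrow> astate \<Rightarrow> bool \<Rightarrow> direction list \<Rightarrow> obs list
    \<Rightarrow> com \<Rightarrow> sstate \<Rightarrow> astate \<Rightarrow> bool \<Rightarrow> bool" where
  Spec_Assign: "spec_step (Assign x e) \<rho> \<mu> \<beta> [] [] Skip (\<rho>(x := aeval \<rho> e)) \<mu> \<beta>"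
| Spec_Seq: "spec_step c1 \<rho> \<mu> \<beta> ds os c1' \<rho>' \<mu>' \<beta>' \<Longrightarrow>
    spec_step (Seq c1 c2) \<rho> \<mu> \<beta> ds os (Seq c1' c2) \<rho>' \<mu>' \<beta>'"
| Spec_Skip: "spec_step (Seq Skip c) \<rho> \<mu> \<beta> [] [] c \<rho> \<mu> \<beta>"
| Spec_If: "v = beval \<rho> b \<Longrightarrow>
    spec_step (If b c1 c2) \<rho> \<mu> \<beta> [DStep] [OBranch v] (if v then c1 else c2) \<rho> \<mu> \<beta>"
| Spec_If_Force: "v = beval \<rho> b \<Longrightarrow>
    spec_step (If b c1 c2) \<rho> \<mu> \<beta> [DForce] [OBranch v] (if v then c2 else c1) \<rho> \<mu> True"
| Spec_While: "spec_step (While b c) \<rho> \<mu> \<beta> [] [] (If b (Seq c (While b c)) Skip) \<rho> \<mu> \<beta>"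
| Spec_Read: "i = aeval \<rho> ie \<Longrightarrow> i < length (\<mu> a) \<Longrightarrow>
    spec_step (ARead x a ie) \<rho> \<mu> \<beta> [DStep] [ORead a i] Skip (\<rho>(x := \<mu> a ! i)) \<mu> \<beta>"
| Spec_Read_Force: "\<beta> = True \<Longrightarrow> i = aeval \<rho> ie \<Longrightarrow> i \<ge> length (\<mu> a) \<Longrightarrow> j < length (\<mu> a') \<Longrightarrow>
    spec_step (ARead x a ie) \<rho> \<mu> \<beta> [DLoad a' j] [ORead a i] Skip (\<rho>(x := \<mu> a' ! j)) \<mu> \<beta>"
| Spec_Write: "i = aeval \<rho> ie \<Longrightarrow> i < length (\<mu> a) \<Longrightarrow>
    spec_step (AWrite a ie e) \<rho> \<mu> \<beta> [DStep] [OWrite a i] Skip \<rho> (\<mu>(a := (\<mu> a)[i := aeval \<rho> e])) \<beta>"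
| Spec_Write_Force: "\<beta> = True \<Longrightarrow> i = aeval \<rho> ie \<Longrightarrow> i \<ge> length (\<mu> a) \<Longrightarrow> j < length (\<mu> a') \<Longrightarrow>
    spec_step (AWrite a ie e) \<rho> \<mu> \<beta> [DStore a' j] [OWrite a i] Skip \<rho> (\<mu>(a' := (\<mu> a')[j := aeval \<rho> e])) \<beta>"

inductive spec_multi :: "com \<Rightarrow> sstate \<Rightarrow> astate \<Rightarrow> bool \<Rightarrow> direction list \<Rightarrow> obs list
    \<Rightarrow> com \<Rightarrow> sstate \<Rightarrow> astate \<Rightarrow> bool \<Rightarrow> bool" where
  spec_refl: "spec_multi c \<rho> \<mu> \<beta> [] [] c \<rho> \<mu> \<beta>"
| spec_trans: "spec_step c \<rho> \<mu> \<beta> ds os c' \<rho>' \<mu>' \<beta>' \<Longrightarrow>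
    spec_multi c' \<rho>' \<mu>' \<beta>' ds' os' c'' \<rho>'' \<mu>'' \<beta>'' \<Longrightarrow>
    spec_multi c \<rho> \<mu> \<beta> (ds @ ds') (os @ os') c'' \<rho>'' \<mu>'' \<beta>''"

definition spec_equiv :: "com \<Rightarrow> sstate \<Rightarrow> astate \<Rightarrow> bool \<Rightarrow> com \<Rightarrow> sstate \<Rightarrow> astate \<Rightarrow> bool \<Rightarrow> bool" where
  "spec_equiv c1 \<rho>1 \<mu>1 \<beta>1 c2 \<rho>2 \<mu>2 \<beta>2 \<longleftrightarrow>
    (\<forall>D O1 O2 c1' \<rho>1' \<mu>1' \<beta>1' c2' \<rho>2' \<mu>2' \<beta>2'.
       spec_multi c1 \<rho>1 \<mu>1 \<beta>1 D O1 c1' \<rho>1' \<mu>1' \<beta>1' \<longrightarrow>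
       spec_multi c2 \<rho>2 \<mu>2 \<beta>2 D O2 c2' \<rho>2' \<mu>2' \<beta>2' \<longrightarrow> O1 = O2)"

definition bvar :: vname where "bvar = ''b''"

definition band :: "bool list \<Rightarrow> bool" where "band bs = (bs ! 0 \<and> bs ! 1)"

definition Bg :: "bexp \<Rightarrow> bexp" where
  "Bg be = BOp band [BCmp (=) (AVar bvar) (ANum 0), be]"

primrec uslh :: "com \<Rightarrow> com" where
  "uslh Skip = Skip"
| "uslh (Assign x e) = Assign x e"
| "uslh (Seq c1 c2) = Seq (uslh c1) (uslh c2)"
| "uslh (If be c1 c2) =
     If (Bg be) (Seq (Assign bvar (ACond (Bg be) (AVar bvar) (ANum 1))) (uslh c1))
                (Seq (Assign bvar (ACond (Bg be) (ANum 1) (AVar bvar))) (uslh c2))"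
| "uslh (While be c) =
     Seq (While (Bg be) (Seq (Assign bvar (ACond (Bg be) (AVar bvar) (ANum 1))) (uslh c)))
         (Assign bvar (ACond (Bg be) (ANum 1) (AVar bvar)))"
| "uslh (ARead x a i) = ARead x a (ACond (BCmp (=) (AVar bvar) (ANum 1)) (ANum 0) i)"
| "uslh (AWrite a i e) = AWrite a (ACond (BCmp (=) (AVar bvar) (ANum 1)) (ANum 0) i) e"

end

theory Submission
  imports Defs
begin

(* Run the two hardened executions in lockstep under the same directives. Until a branch is
   forced, the mask variable b stays 0, so the hardened code behaves like the source: every
   speculative step is matched by sequential steps of the source with the same observations,
   and sequential equivalence makes them agree. A forced branch is matched by the sequential
   branch step and lands on an assignment setting b to 1. From then on every guard is false,
   every array index is 0 and b stays 1, so the observations depend on the command alone,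
   which both runs share. *)

(* Keeps the constant ANum 1 of the mask assignments from being rewritten to ANum (Suc 0),
   which would stop them matching the abbreviations below. *)
declare One_nat_def [simp del]

inductive_simps spec_step_Skip [simp]: "spec_step Skip \<rho> \<mu> \<beta> ds os c' \<rho>' \<mu>' \<beta>'"
inductive_simps spec_step_Assign [simp]: "spec_step (Assign x e) \<rho> \<mu> \<beta> ds os c' \<rho>' \<mu>' \<beta>'"
inductive_simps spec_step_Seq [simp]: "spec_step (Seq c1 c2) \<rho> \<mu> \<beta> ds os c' \<rho>' \<mu>' \<beta>'"
inductive_simps spec_step_If [simp]: "spec_step (If b c1 c2) \<rho> \<mu> \<beta> ds os c' \<rho>' \<mu>' \<beta>'"
inductive_simps spec_step_While [simp]: "spec_step (While b c) \<rho> \<mu> \<beta> ds os c' \<rho>' \<mu>' \<beta>'"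
inductive_simps spec_step_ARead [simp]: "spec_step (ARead x a i) \<rho> \<mu> \<beta> ds os c' \<rho>' \<mu>' \<beta>'"
inductive_simps spec_step_AWrite [simp]: "spec_step (AWrite a i e) \<rho> \<mu> \<beta> ds os c' \<rho>' \<mu>' \<beta>'"

lemma spec_step_length:
  "spec_step c \<rho> \<mu> \<beta> ds os c' \<rho>' \<mu>' \<beta>' \<Longrightarrow> length os = length ds \<and> length ds \<le> 1"
  by (induction rule: spec_step.induct) auto

lemma spec_multi_length:
  "spec_multi c \<rho> \<mu> \<beta> D Os c' \<rho>' \<mu>' \<beta>' \<Longrightarrow> length Os = length D"
  by (induction rule: spec_multi.induct) (auto dest: spec_step_length)

lemma spec_step_flag:
  "spec_step c \<rho> \<mu> \<beta> ds os c' \<rho>' \<mu>' \<beta>' \<Longrightarrow> \<beta>' = (\<beta> \<or> ds = [DForce])"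
  by (induction rule: spec_step.induct) auto

lemma spec_step_same_command:
  assumes "spec_step c \<rho> \<mu> \<beta> ds os c' \<rho>' \<mu>' \<beta>'"
    and "spec_step c \<rho>2 \<mu>2 \<beta>2 ds2 os2 c2' \<rho>2' \<mu>2' \<beta>2'"
  shows "(ds = []) = (ds2 = []) \<and> (ds = ds2 \<longrightarrow> os = os2 \<longrightarrow> c' = c2')"
  using assms
proof (induction arbitrary: ds2 os2 c2' \<rho>2 \<mu>2 \<beta>2 \<rho>2' \<mu>2' \<beta>2' rule: spec_step.induct)
  case (Spec_Seq c1 \<rho> \<mu> \<beta> ds os c1' \<rho>' \<mu>' \<beta>' c2)
  have "c1 \<noteq> Skip" using Spec_Seq.hyps by auto
  then obtain c1'' where "c2' = Seq c1'' c2" "spec_step c1 \<rho>2 \<mu>2 \<beta>2 ds2 os2 c1'' \<rho>2' \<mu>2' \<beta>2'"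
    using Spec_Seq.prems by auto
  then show ?case using Spec_Seq.IH by blast
qed auto

lemma spec_step_length_preserved:
  "spec_step c \<rho> \<mu> \<beta> ds os c' \<rho>' \<mu>' \<beta>' \<Longrightarrow> length (\<mu>' a) = length (\<mu> a)"
  by (induction rule: spec_step.induct) auto

lemma spec_equiv_if_lockstep:
  assumes step: "\<And>c \<rho>1 \<mu>1 \<beta>1 \<rho>2 \<mu>2 \<beta>2 ds os1 c1 \<rho>1' \<mu>1' \<beta>1' os2 c2 \<rho>2' \<mu>2' \<beta>2'.
      I c \<rho>1 \<mu>1 \<beta>1 \<rho>2 \<mu>2 \<beta>2 \<Longrightarrow> spec_step c \<rho>1 \<mu>1 \<beta>1 ds os1 c1 \<rho>1' \<mu>1' \<beta>1' \<Longrightarrow>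
      spec_step c \<rho>2 \<mu>2 \<beta>2 ds os2 c2 \<rho>2' \<mu>2' \<beta>2' \<Longrightarrow>
      os1 = os2 \<and> c1 = c2 \<and> I c1 \<rho>1' \<mu>1' \<beta>1' \<rho>2' \<mu>2' \<beta>2'"
    and init: "I c \<rho>1 \<mu>1 \<beta>1 \<rho>2 \<mu>2 \<beta>2"
  shows "spec_equiv c \<rho>1 \<mu>1 \<beta>1 c \<rho>2 \<mu>2 \<beta>2"
proof -
  have "O1 = O2"
    if "spec_multi c \<rho>1 \<mu>1 \<beta>1 D O1 c1 \<rho>1' \<mu>1' \<beta>1'" "I c \<rho>1 \<mu>1 \<beta>1 \<rho>2 \<mu>2 \<beta>2"
      "spec_multi c \<rho>2 \<mu>2 \<beta>2 D O2 c2 \<rho>2' \<mu>2' \<beta>2'"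
    for c \<rho>1 \<mu>1 \<beta>1 D O1 c1 \<rho>1' \<mu>1' \<beta>1' \<rho>2 \<mu>2 \<beta>2 O2 c2 \<rho>2' \<mu>2' \<beta>2'
    using that
  proof (induction arbitrary: \<rho>2 \<mu>2 \<beta>2 O2 c2 \<rho>2' \<mu>2' \<beta>2' rule: spec_multi.induct)
    case spec_refl
    then show ?case using spec_multi_length by fastforce
  next
    case (spec_trans c \<rho>1 \<mu>1 \<beta>1 ds os c' \<rho>1' \<mu>1' \<beta>1' ds' os' c'' \<rho>1'' \<mu>1'' \<beta>1'')
    from spec_trans.prems(2) show ?case
    proof cases
      case spec_refl
      then show ?thesis
        using spec_step_length[OF spec_trans.hyps(1)] spec_multi_length[OF spec_trans.hyps(2)] by simp
    next
      case (spec_trans ds2 os2 cm \<rho>m \<mu>m \<beta>m ds2' os2')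
      note step2 = \<open>spec_step c \<rho>2 \<mu>2 \<beta>2 ds2 os2 cm \<rho>m \<mu>m \<beta>m\<close>
      have "ds = ds2"
        using spec_step_same_command[OF spec_trans.hyps(1) step2] \<open>ds @ ds' = ds2 @ ds2'\<close>
          spec_step_length[OF spec_trans.hyps(1)] spec_step_length[OF step2]
        by (cases ds; cases ds2) auto
      then show ?thesis
        using step[OF spec_trans.prems(1) spec_trans.hyps(1)] step2 spec_trans spec_trans.IH by fastforce
    qed
  qed
  with init show ?thesis
    unfolding spec_equiv_def by blast
qed

lemma seq_multi_trans:
  "seq_multi c \<rho> \<mu> O1 c' \<rho>' \<mu>' \<Longrightarrow> seq_multi c' \<rho>' \<mu>' O2 c'' \<rho>'' \<mu>'' \<Longrightarrow>
   seq_multi c \<rho> \<mu> (O1 @ O2) c'' \<rho>'' \<mu>''"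
  by (induction rule: seq_multi.induct) (auto intro: seq_multi.intros)

lemma seq_step_multi: "seq_step c \<rho> \<mu> os c' \<rho>' \<mu>' \<Longrightarrow> seq_multi c \<rho> \<mu> os c' \<rho>' \<mu>'"
  using seq_trans[OF _ seq_refl] by fastforce

lemma seq_multi_Seq:
  "seq_multi c1 \<rho> \<mu> os c1' \<rho>' \<mu>' \<Longrightarrow> seq_multi (Seq c1 c2) \<rho> \<mu> os (Seq c1' c2) \<rho>' \<mu>'"
  by (induction rule: seq_multi.induct) (auto intro: seq_multi.intros seq_step.intros)

lemma seq_multi_used_vars:
  "seq_multi c \<rho> \<mu> os c' \<rho>' \<mu>' \<Longrightarrow> used_vars c' \<subseteq> used_vars c"
proof (induction rule: seq_multi.induct)
  case (seq_trans c \<rho> \<mu> os c' \<rho>' \<mu>' os' c'' \<rho>'' \<mu>'')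
  have "used_vars c' \<subseteq> used_vars c"
    using seq_trans.hyps(1) by (induction rule: seq_step.induct) auto
  with seq_trans.IH show ?case by simp
qed simp

lemma seq_equiv_seq_multi:
  assumes "seq_equiv c1 \<rho>1 \<mu>1 c2 \<rho>2 \<mu>2"
    and "seq_multi c1 \<rho>1 \<mu>1 os c1' \<rho>1' \<mu>1'" and "seq_multi c2 \<rho>2 \<mu>2 os c2' \<rho>2' \<mu>2'"
  shows "seq_equiv c1' \<rho>1' \<mu>1' c2' \<rho>2' \<mu>2'"
  unfolding seq_equiv_def
proof (intro allI impI)
  fix O1 O2 d1 \<rho>1'' \<mu>1'' d2 \<rho>2'' \<mu>2''
  assume "seq_multi c1' \<rho>1' \<mu>1' O1 d1 \<rho>1'' \<mu>1''" "seq_multi c2' \<rho>2' \<mu>2' O2 d2 \<rho>2'' \<mu>2''"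
  then have "prefix (os @ O1) (os @ O2) \<or> prefix (os @ O2) (os @ O1)"
    using assms seq_multi_trans unfolding seq_equiv_def by blast
  then show "prefix O1 O2 \<or> prefix O2 O1" by simp
qed

lemma seq_equiv_obs_eq:
  assumes "seq_equiv c1 \<rho>1 \<mu>1 c2 \<rho>2 \<mu>2"
    and "seq_multi c1 \<rho>1 \<mu>1 os1 c1' \<rho>1' \<mu>1'" and "seq_multi c2 \<rho>2 \<mu>2 os2 c2' \<rho>2' \<mu>2'"
    and "length os1 = length os2"
  shows "os1 = os2"
proof -
  have "prefix os1 os2 \<or> prefix os2 os1"
    using assms(1-3) unfolding seq_equiv_def by blast
  with assms(4) show ?thesis by (auto simp: prefix_def)
qed

lemma beval_Bg [simp]: "beval \<rho> (Bg be) = (\<rho> bvar = 0 \<and> beval \<rho> be)"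
  by (simp add: Bg_def band_def)

fun head_cmd :: "com \<Rightarrow> com" where
  "head_cmd (Seq c1 c2) = (if c1 = Skip then head_cmd c2 else head_cmd c1)"
| "head_cmd c = c"

fun masked :: "com \<Rightarrow> bool" where
  "masked Skip = True"
| "masked (Assign x e) = (x = bvar \<longrightarrow> (\<forall>\<rho>. \<rho> bvar = 1 \<longrightarrow> aeval \<rho> e = 1))"
| "masked (Seq c1 c2) = (masked c1 \<and> masked c2)"
| "masked (If b c1 c2) = ((\<forall>\<rho>. \<rho> bvar = 1 \<longrightarrow> \<not> beval \<rho> b) \<and> masked c1 \<and> masked c2)"
| "masked (While b c) = ((\<forall>\<rho>. \<rho> bvar = 1 \<longrightarrow> \<not> beval \<rho> b) \<and> masked c)"
| "masked (ARead x a i) = (x \<noteq> bvar \<and> (\<forall>\<rho>. \<rho> bvar = 1 \<longrightarrow> aeval \<rho> i = 0))"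
| "masked (AWrite a i e) = (\<forall>\<rho>. \<rho> bvar = 1 \<longrightarrow> aeval \<rho> i = 0)"

fun masked_obs :: "com \<Rightarrow> obs list" where
  "masked_obs (Seq c1 c2) = (if c1 = Skip then [] else masked_obs c1)"
| "masked_obs (If b c1 c2) = [OBranch False]"
| "masked_obs (ARead x a i) = [ORead a 0]"
| "masked_obs (AWrite a i e) = [OWrite a 0]"
| "masked_obs c = []"

(* The second disjunct is the configuration right after a forced branch, before the mask
   assignment setting b to 1 has run. *)
definition misspeculated :: "com \<Rightarrow> sstate \<Rightarrow> astate \<Rightarrow> bool" where
  "misspeculated c \<rho> \<mu> \<longleftrightarrow> masked c \<and> (\<forall>a. 0 < length (\<mu> a)) \<and>
     (\<rho> bvar = 1 \<or> (\<exists>e. head_cmd c = Assign bvar e \<and> aeval \<rho> e = 1))"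

lemma masked_uslh: "bvar \<notin> used_vars c \<Longrightarrow> masked (uslh c)"
  by (induction c) auto

lemma misspeculated_step:
  "spec_step c \<rho> \<mu> \<beta> ds os c' \<rho>' \<mu>' \<beta>' \<Longrightarrow> misspeculated c \<rho> \<mu> \<Longrightarrow>
   os = masked_obs c \<and> misspeculated c' \<rho>' \<mu>'"
proof (induction rule: spec_step.induct)
  case (Spec_Seq c1 \<rho> \<mu> \<beta> ds os c1' \<rho>' \<mu>' \<beta>' c2)
  then have "c1 \<noteq> Skip" by auto
  with Spec_Seq.prems have "misspeculated c1 \<rho> \<mu>"
    by (auto simp: misspeculated_def)
  with Spec_Seq show ?case
    by (auto simp: misspeculated_def)
qed (auto simp: misspeculated_def)

abbreviation mask_then :: "bexp \<Rightarrow> com" where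
  "mask_then be \<equiv> Assign bvar (ACond (Bg be) (AVar bvar) (ANum 1))"

abbreviation mask_else :: "bexp \<Rightarrow> com" where
  "mask_else be \<equiv> Assign bvar (ACond (Bg be) (ANum 1) (AVar bvar))"

abbreviation uslh_loop :: "bexp \<Rightarrow> com \<Rightarrow> com" where
  "uslh_loop be c \<equiv> While (Bg be) (Seq (mask_then be) (uslh c))"

(* Hardened code reached from uslh s by unforced steps, paired with the matching source command;
   the premises on \<rho> say that the pending mask assignment leaves b at 0. *)
inductive uslh_residual :: "sstate \<Rightarrow> com \<Rightarrow> com \<Rightarrow> bool" for \<rho> where
  residual_uslh: "(\<forall>s1 s2. s \<noteq> Seq s1 s2) \<Longrightarrow> uslh_residual \<rho> s (uslh s)"
| residual_Seq: "uslh_residual \<rho> s1 c1 \<Longrightarrow> uslh_residual \<rho> (Seq s1 s2) (Seq c1 (uslh s2))"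
| residual_mask_then: "beval \<rho> be \<Longrightarrow> uslh_residual \<rho> s (Seq (mask_then be) (uslh s))"
| residual_mask_else: "\<not> beval \<rho> be \<Longrightarrow> uslh_residual \<rho> s (Seq (mask_else be) (uslh s))"
| residual_masked: "uslh_residual \<rho> s (Seq Skip (uslh s))"
| residual_loop_test: "uslh_residual \<rho> (If be (Seq s (While be s)) Skip)
    (Seq (If (Bg be) (Seq (Seq (mask_then be) (uslh s)) (uslh_loop be s)) Skip) (mask_else be))"
| residual_loop_body: "uslh_residual \<rho> s' c \<Longrightarrow>
    uslh_residual \<rho> (Seq s' (While be s)) (Seq (Seq c (uslh_loop be s)) (mask_else be))"
| residual_loop_exit: "\<not> beval \<rho> be \<Longrightarrow> uslh_residual \<rho> Skip (Seq Skip (mask_else be))"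
| residual_loop_done: "\<not> beval \<rho> be \<Longrightarrow> uslh_residual \<rho> Skip (mask_else be)"

lemma uslh_residual_uslh: "uslh_residual \<rho> s (uslh s)"
proof (induction s)
  case (Seq s1 s2)
  then show ?case by (simp add: residual_Seq)
qed (rule residual_uslh, simp)+

lemma uslh_residual_Skip: "uslh_residual \<rho> s Skip \<Longrightarrow> s = Skip"
proof -
  have "uslh s = Skip \<Longrightarrow> s = Skip" for s by (cases s) auto
  then show "uslh_residual \<rho> s Skip \<Longrightarrow> s = Skip"
    by (auto elim: uslh_residual.cases)
qed

lemmas uslh_residual_Skip_Skip = uslh_residual_uslh[of _ Skip, simplified]

definition step_simulated ::
  "com \<Rightarrow> sstate \<Rightarrow> astate \<Rightarrow> direction list \<Rightarrow> obs list \<Rightarrow> com \<Rightarrow> sstate \<Rightarrow> astate \<Rightarrow> bool" where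
  "step_simulated s \<rho> \<mu> ds os c' \<rho>' \<mu>' \<longleftrightarrow>
     (if ds = [DForce]
      then (\<exists>s' \<rho>s \<mu>s. seq_multi s \<rho> \<mu> os s' \<rho>s \<mu>s) \<and> misspeculated c' \<rho>' \<mu>'
      else \<rho>' bvar = 0 \<and> (\<exists>s'. seq_multi s \<rho> \<mu> os s' \<rho>' \<mu>' \<and> uslh_residual \<rho>' s' c'))"

lemma misspeculated_Seq:
  "misspeculated c1 \<rho> \<mu> \<Longrightarrow> masked c2 \<Longrightarrow> misspeculated (Seq c1 c2) \<rho> \<mu>"
  by (cases "c1 = Skip") (auto simp: misspeculated_def)

lemma step_simulated_Seq:
  "step_simulated s1 \<rho> \<mu> ds os c1' \<rho>' \<mu>' \<Longrightarrow> bvar \<notin> used_vars s2 \<Longrightarrow>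
   step_simulated (Seq s1 s2) \<rho> \<mu> ds os (Seq c1' (uslh s2)) \<rho>' \<mu>'"
  unfolding step_simulated_def
  by (auto intro: misspeculated_Seq masked_uslh) (blast intro: seq_multi_Seq residual_Seq)+

lemma step_simulated_loop_body:
  assumes sim: "step_simulated s1 \<rho> \<mu> ds os c1' \<rho>' \<mu>'" and "bvar \<notin> used_vars (While be s)"
  shows "step_simulated (Seq s1 (While be s)) \<rho> \<mu> ds os
     (Seq (Seq c1' (uslh_loop be s)) (mask_else be)) \<rho>' \<mu>'"
proof -
  have "masked (uslh_loop be s)" "masked (mask_else be)"
    using masked_uslh[OF assms(2)] by simp_all
  with sim show ?thesis
    unfolding step_simulated_def
    by (auto simp del: masked.simps intro!: misspeculated_Seq)
      (meson seq_multi_Seq residual_loop_body)+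
qed

lemma uslh_step_simulated:
  assumes "\<forall>s1 s2. s \<noteq> Seq s1 s2" and "spec_step (uslh s) \<rho> \<mu> False ds os c' \<rho>' \<mu>' \<beta>'"
    and "\<rho> bvar = 0" and "bvar \<notin> used_vars s"
    and "\<forall>a. 0 < length (\<mu> a)"
  shows "step_simulated s \<rho> \<mu> ds os c' \<rho>' \<mu>'"
proof (cases s)
  case (Assign x e)
  then show ?thesis using assms
    by (auto simp: step_simulated_def intro: seq_step_multi seq_step.intros uslh_residual_Skip_Skip)
next
  case (If be s1 s2)
  have seq: "seq_multi s \<rho> \<mu> [OBranch (beval \<rho> be)] (if beval \<rho> be then s1 else s2) \<rho> \<mu>"
    using If seq_step_multi[OF Seq_If[OF refl]] by simp
  show ?thesis using assms If seq masked_uslh[of s1] masked_uslh[of s2]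
    by (cases "beval \<rho> be")
      (auto simp: step_simulated_def misspeculated_def intro: residual_mask_then residual_mask_else)
next
  case (While be s0)
  then show ?thesis using assms
    by (auto simp: step_simulated_def
        intro: seq_step_multi seq_step.intros residual_loop_test)
next
  case (ARead x a i)
  then show ?thesis using assms
    by (auto simp: step_simulated_def intro!: seq_step_multi seq_step.intros uslh_residual_Skip_Skip)
next
  case (AWrite a i e)
  then show ?thesis using assms
    by (auto simp: step_simulated_def intro!: seq_step_multi seq_step.intros uslh_residual_Skip_Skip)
qed (use assms in auto)

lemma uslh_residual_step_simulated:
  "uslh_residual \<rho> s c \<Longrightarrow> spec_step c \<rho> \<mu> False ds os c' \<rho>' \<mu>' \<beta>' \<Longrightarrow> \<rho> bvar = 0 \<Longrightarrow>
   bvar \<notin> used_vars s \<Longrightarrow> \<forall>a. 0 < length (\<mu> a) \<Longrightarrow> step_simulated s \<rho> \<mu> ds os c' \<rho>' \<mu>'"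
proof (induction arbitrary: ds os c' \<rho>' \<mu>' \<beta>' rule: uslh_residual.induct)
  case (residual_uslh s)
  then show ?case by (rule uslh_step_simulated)
next
  case (residual_Seq s1 c1 s2)
  show ?case
  proof (cases "c1 = Skip")
    case True
    then have "s1 = Skip" using residual_Seq.hyps uslh_residual_Skip by simp
    then show ?thesis using True residual_Seq.prems
      by (auto simp: step_simulated_def intro: seq_step_multi seq_step.intros uslh_residual_uslh)
  next
    case False
    then obtain c1' where "c' = Seq c1' (uslh s2)" "spec_step c1 \<rho> \<mu> False ds os c1' \<rho>' \<mu>' \<beta>'"
      using residual_Seq.prems(1) by auto
    with residual_Seq show ?thesis by (auto intro: step_simulated_Seq)
  qed
next
  case (residual_loop_test be s)
  have seq: "seq_multi (If be (Seq s (While be s)) Skip) \<rho> \<mu> [OBranch (beval \<rho> be)]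
      (if beval \<rho> be then Seq s (While be s) else Skip) \<rho> \<mu>"
    using seq_step_multi[OF Seq_If[OF refl]] by simp
  have "masked (uslh (While be s))"
    using residual_loop_test.prems(3) by (auto intro: masked_uslh)
  with residual_loop_test.prems seq show ?case
    by (cases "beval \<rho> be")
      (auto simp: step_simulated_def misspeculated_def
        intro: residual_loop_body residual_mask_then residual_loop_exit)
next
  case (residual_loop_body s' c be s)
  from residual_loop_body.prems(1) obtain c1' where
    c': "c' = Seq c1' (mask_else be)" and
    step: "spec_step (Seq c (uslh_loop be s)) \<rho> \<mu> False ds os c1' \<rho>' \<mu>' \<beta>'"
    by auto
  show ?case
  proof (cases "c = Skip")
    case True
    then have "s' = Skip" using residual_loop_body.hyps uslh_residual_Skip by simp
    then have "seq_multi (Seq s' (While be s)) \<rho> \<mu> [] (While be s) \<rho> \<mu>"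
      by (auto intro: seq_step_multi seq_step.intros)
    moreover have "uslh_residual \<rho> (While be s) (uslh (While be s))"
      by (rule uslh_residual_uslh)
    ultimately show ?thesis using True c' step residual_loop_body.prems
      by (auto simp: step_simulated_def)
  next
    case False
    then obtain c'' where
      "c1' = Seq c'' (uslh_loop be s)" "spec_step c \<rho> \<mu> False ds os c'' \<rho>' \<mu>' \<beta>'"
      using step by auto
    with residual_loop_body c' show ?thesis by (auto intro: step_simulated_loop_body)
  qed
qed (auto simp: step_simulated_def fun_upd_idem
      intro: seq_refl uslh_residual.intros uslh_residual_uslh uslh_residual_Skip_Skip)

definition lockstep_inv :: "com \<Rightarrow> sstate \<Rightarrow> astate \<Rightarrow> bool \<Rightarrow> sstate \<Rightarrow> astate \<Rightarrow> bool \<Rightarrow> bool" where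
  "lockstep_inv c \<rho>1 \<mu>1 \<beta>1 \<rho>2 \<mu>2 \<beta>2 \<longleftrightarrow>
     (\<not> \<beta>1 \<and> \<not> \<beta>2 \<and> \<rho>1 bvar = 0 \<and> \<rho>2 bvar = 0 \<and>
      (\<forall>a. 0 < length (\<mu>1 a)) \<and> (\<forall>a. 0 < length (\<mu>2 a)) \<and>
      (\<exists>s1 s2. uslh_residual \<rho>1 s1 c \<and> uslh_residual \<rho>2 s2 c \<and>
         bvar \<notin> used_vars s1 \<and> bvar \<notin> used_vars s2 \<and> seq_equiv s1 \<rho>1 \<mu>1 s2 \<rho>2 \<mu>2)) \<or>
     (misspeculated c \<rho>1 \<mu>1 \<and> misspeculated c \<rho>2 \<mu>2)"

lemma lockstep_inv_step:
  assumes inv: "lockstep_inv c \<rho>1 \<mu>1 \<beta>1 \<rho>2 \<mu>2 \<beta>2"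
    and step1: "spec_step c \<rho>1 \<mu>1 \<beta>1 ds os1 c1 \<rho>1' \<mu>1' \<beta>1'"
    and step2: "spec_step c \<rho>2 \<mu>2 \<beta>2 ds os2 c2 \<rho>2' \<mu>2' \<beta>2'"
  shows "os1 = os2 \<and> c1 = c2 \<and> lockstep_inv c1 \<rho>1' \<mu>1' \<beta>1' \<rho>2' \<mu>2' \<beta>2'"
proof (cases "misspeculated c \<rho>1 \<mu>1 \<and> misspeculated c \<rho>2 \<mu>2")
  case True
  with step1 step2 show ?thesis
    using misspeculated_step spec_step_same_command[OF step1 step2]
    unfolding lockstep_inv_def by metis
next
  case False
  with inv obtain s1 s2 where "\<not> \<beta>1" "\<not> \<beta>2" "\<rho>1 bvar = 0" "\<rho>2 bvar = 0"
      and nonempty: "\<forall>a. 0 < length (\<mu>1 a)" "\<forall>a. 0 < length (\<mu>2 a)"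
      and "uslh_residual \<rho>1 s1 c" "uslh_residual \<rho>2 s2 c"
      and "bvar \<notin> used_vars s1" "bvar \<notin> used_vars s2"
      and equiv: "seq_equiv s1 \<rho>1 \<mu>1 s2 \<rho>2 \<mu>2"
    unfolding lockstep_inv_def by blast
  then have sim1: "step_simulated s1 \<rho>1 \<mu>1 ds os1 c1 \<rho>1' \<mu>1'"
    and sim2: "step_simulated s2 \<rho>2 \<mu>2 ds os2 c2 \<rho>2' \<mu>2'"
    using step1 step2 by (auto intro: uslh_residual_step_simulated)
  have "length os1 = length os2"
    using spec_step_length[OF step1] spec_step_length[OF step2] by simp
  with sim1 sim2 equiv have os: "os1 = os2"
    unfolding step_simulated_def by (metis seq_equiv_obs_eq)
  moreover have c: "c1 = c2"
    using spec_step_same_command[OF step1 step2] os by simp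
  moreover have "lockstep_inv c1 \<rho>1' \<mu>1' \<beta>1' \<rho>2' \<mu>2' \<beta>2'"
  proof (cases "ds = [DForce]")
    case True
    with sim1 sim2 c show ?thesis
      unfolding step_simulated_def lockstep_inv_def by simp
  next
    case False
    with sim1 sim2 os obtain s1' s2' where
      "seq_multi s1 \<rho>1 \<mu>1 os1 s1' \<rho>1' \<mu>1'" "seq_multi s2 \<rho>2 \<mu>2 os1 s2' \<rho>2' \<mu>2'"
      "uslh_residual \<rho>1' s1' c1" "uslh_residual \<rho>2' s2' c2" "\<rho>1' bvar = 0" "\<rho>2' bvar = 0"
      unfolding step_simulated_def by auto
    moreover have "\<not> \<beta>1'" "\<not> \<beta>2'"
      using spec_step_flag[OF step1] spec_step_flag[OF step2] False \<open>\<not> \<beta>1\<close> \<open>\<not> \<beta>2\<close> by auto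
    moreover have "\<forall>a. 0 < length (\<mu>1' a)" "\<forall>a. 0 < length (\<mu>2' a)"
      using nonempty spec_step_length_preserved[OF step1] spec_step_length_preserved[OF step2] by auto
    ultimately show ?thesis
      using c seq_equiv_seq_multi[OF equiv] seq_multi_used_vars
        \<open>bvar \<notin> used_vars s1\<close> \<open>bvar \<notin> used_vars s2\<close>
      unfolding lockstep_inv_def by blast
  qed
  ultimately show ?thesis by blast
qed

theorem theorem3p2:
  fixes c :: com and \<rho>1 \<rho>2 :: sstate and \<mu>1 \<mu>2 :: astate
  assumes "bvar \<notin> used_vars c"
    and "\<rho>1 bvar = 0" and "\<rho>2 bvar = 0"
    and "\<forall>a. length (\<mu>1 a) > 0" and "\<forall>a. length (\<mu>2 a) > 0"
    and "seq_equiv c \<rho>1 \<mu>1 c \<rho>2 \<mu>2"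
  shows "spec_equiv (uslh c) \<rho>1 \<mu>1 False (uslh c) \<rho>2 \<mu>2 False"
proof -
  have "lockstep_inv (uslh c) \<rho>1 \<mu>1 False \<rho>2 \<mu>2 False"
    unfolding lockstep_inv_def using assms uslh_residual_uslh by blast
  then show ?thesis
    using spec_equiv_if_lockstep[of lockstep_inv] lockstep_inv_step by blast
qed

end
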